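(* Let $\Pi=(\iota,\tau,\beta)$ be a safety problem over a vocabulary $\Sigma$, let $\varphi(x)$ be a formula over $\Sigma$ with free variable $x$, and let $w$ be a fresh constant symbol not in $\Sigma$. Let $\xi$ be a soundness invariant for $\varphi(w)$ (a closed formula over $\Sigma\cup\{m\}$) and let $\psi$ be a safe inductive invariant of $\Pi^w_\varphi$ (a closed formula over $\Sigma\cup\{w\}$). Then $\xi[\psi/m]$, which is a closed formula over $\Sigma$, is a safe inductive invariant of $\Pi$.
   Context: A first-order vocabulary $\Sigma$ consists of constant, function and relation symbols; $\Sigma'=\{a' : a\in\Sigma\}$ is a disjoint copy, and for a formula $\varphi$, $\varphi'$ denotes $\varphi$ with every vocabulary symbol replaced by its primed copy. A safety problem over $\Sigma$ is a triple $(\iota,\tau,\beta)$, where $\iota,\beta$ are closed formulas over $\Sigma$ and $\tau$ is a closed formula over $\Sigma\uplus\Sigma'$. $A\Rightarrow B$ means the implication $A\to B$ is valid. A closed formula $\chi$ is a safe inductive invariant of $(\iota,\tau,\beta)$ if $\iota\Rightarrow\chi$, $\chi\wedge\tau\Rightarrow\chi'$ and $\chi\Rightarrow\neg\beta$. $\varphi(w)$ is $\varphi$ with $x$ replaced by $w$. The safety problem $\Pi^w_\varphi$ over $\Sigma\cup\{w\}$ is $\big(\iota\wedge\varphi(w),\ \varphi(w)\wedge\tau\wedge w'=w\wedge(\varphi(w))',\ \beta\wedge\varphi(w)\big)$. With $m$ a fresh unary relation symbol, the safety problem $\Pi^{\mathrm{sound}}_\varphi$ over $\Sigma\cup\{m\}$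 is $\big(\iota\wedge\forall x.\,\varphi(x)\to m(x),\ \tau\wedge\forall x.\,(m(x)\wedge\varphi(x)\wedge\varphi'(x))\to m'(x),\ \beta\wedge\forall x.\,\varphi(x)\to\neg m(x)\big)$; a soundness invariant for $\varphi(w)$ is a safe inductive invariant of $\Pi^{\mathrm{sound}}_\varphi$. $\xi[\psi/m]$ denotes the formula obtained from $\xi$ by replacing every atom $m(t)$, for any term $t$, with $\psi[t/w]$ ($\psi$ with $w$ replaced by $t$), where bound variables of $\xi$ and $\psi$ are assumed distinct. *)

theory Defs
  imports Main
begin

section \<open>First-order syntax (named variables; constants are 0-ary function symbols)\<close>

datatype 'f trm = Var nat | Fn 'f "'f trm list"

datatype ('f, 'r) fm =
    Bot
  | Atom 'r "'f trm list"
  | Eq "'f trm" "'f trm"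
  | Neg "('f, 'r) fm"
  | Conj "('f, 'r) fm" "('f, 'r) fm"
  | Disj "('f, 'r) fm" "('f, 'r) fm"
  | Imp "('f, 'r) fm" "('f, 'r) fm"
  | All nat "('f, 'r) fm"
  | Ex nat "('f, 'r) fm"

text \<open>Symbols of the two-vocabulary setting: Cur a is the symbol a of Sigma,
  Nxt a is its primed copy a' in Sigma'.\<close>
datatype 'a tv = Cur 'a | Nxt 'a

record ('f, 'r) vocab =
  fun_ar :: "'f \<Rightarrow> nat option"
  rel_ar :: "'r \<Rightarrow> nat option"

definition dbl :: "('f, 'r) vocab \<Rightarrow> ('f tv, 'r tv) vocab" where
  "dbl V = \<lparr> fun_ar = case_tv (fun_ar V) (fun_ar V), rel_ar = case_tv (rel_ar V) (rel_ar V) \<rparr>"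

definition add_const :: "('f, 'r) vocab \<Rightarrow> 'f \<Rightarrow> ('f, 'r) vocab" where
  "add_const V c = V \<lparr> fun_ar := (fun_ar V)(c := Some 0) \<rparr>"

definition add_unary_rel :: "('f, 'r) vocab \<Rightarrow> 'r \<Rightarrow> ('f, 'r) vocab" where
  "add_unary_rel V r = V \<lparr> rel_ar := (rel_ar V)(r := Some 1) \<rparr>"

fun wf_trm :: "('f, 'r) vocab \<Rightarrow> 'f trm \<Rightarrow> bool" where
  "wf_trm V (Var x) = True"
| "wf_trm V (Fn f ts) = (fun_ar V f = Some (length ts) \<and> (\<forall>t\<in>set ts. wf_trm V t))"

fun wf_fm :: "('f, 'r) vocab \<Rightarrow> ('f, 'r) fm \<Rightarrow> bool" where
  "wf_fm V Bot = True"
| "wf_fm V (Atom r ts) = (rel_ar V r = Some (length ts) \<and> (\<forall>t\<in>set ts. wf_trm V t))"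
| "wf_fm V (Eq s t) = (wf_trm V s \<and> wf_trm V t)"
| "wf_fm V (Neg p) = wf_fm V p"
| "wf_fm V (Conj p q) = (wf_fm V p \<and> wf_fm V q)"
| "wf_fm V (Disj p q) = (wf_fm V p \<and> wf_fm V q)"
| "wf_fm V (Imp p q) = (wf_fm V p \<and> wf_fm V q)"
| "wf_fm V (All x p) = wf_fm V p"
| "wf_fm V (Ex x p) = wf_fm V p"

fun fv_trm :: "'f trm \<Rightarrow> nat set" where
  "fv_trm (Var x) = {x}"
| "fv_trm (Fn f ts) = (\<Union>t\<in>set ts. fv_trm t)"

fun fv :: "('f, 'r) fm \<Rightarrow> nat set" where
  "fv Bot = {}"
| "fv (Atom r ts) = (\<Union>t\<in>set ts. fv_trm t)"
| "fv (Eq s t) = fv_trm s \<union> fv_trm t"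
| "fv (Neg p) = fv p"
| "fv (Conj p q) = fv p \<union> fv q"
| "fv (Disj p q) = fv p \<union> fv q"
| "fv (Imp p q) = fv p \<union> fv q"
| "fv (All x p) = fv p - {x}"
| "fv (Ex x p) = fv p - {x}"

definition closed :: "('f, 'r) fm \<Rightarrow> bool" where
  "closed p \<longleftrightarrow> fv p = {}"

fun bv :: "('f, 'r) fm \<Rightarrow> nat set" where
  "bv Bot = {}"
| "bv (Atom r ts) = {}"
| "bv (Eq s t) = {}"
| "bv (Neg p) = bv p"
| "bv (Conj p q) = bv p \<union> bv q"
| "bv (Disj p q) = bv p \<union> bv q"
| "bv (Imp p q) = bv p \<union> bv q"
| "bv (All x p) = insert x (bv p)"
| "bv (Ex x p) = insert x (bv p)"

definition cur :: "('f, 'r) fm \<Rightarrow> ('f tv, 'r tv) fm" where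
  "cur p = map_fm Cur Cur p"

definition prime :: "('f, 'r) fm \<Rightarrow> ('f tv, 'r tv) fm" where
  "prime p = map_fm Nxt Nxt p"

type_synonym ('f, 'r, 'u) struct = "('f \<Rightarrow> 'u list \<Rightarrow> 'u) \<times> ('r \<Rightarrow> 'u list \<Rightarrow> bool)"

fun evalt :: "('f, 'r, 'u) struct \<Rightarrow> (nat \<Rightarrow> 'u) \<Rightarrow> 'f trm \<Rightarrow> 'u" where
  "evalt I e (Var x) = e x"
| "evalt I e (Fn f ts) = fst I f (map (evalt I e) ts)"

fun holds :: "('f, 'r, 'u) struct \<Rightarrow> (nat \<Rightarrow> 'u) \<Rightarrow> ('f, 'r) fm \<Rightarrow> bool" where
  "holds I e Bot = False"
| "holds I e (Atom r ts) = snd I r (map (evalt I e) ts)"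
| "holds I e (Eq s t) = (evalt I e s = evalt I e t)"
| "holds I e (Neg p) = (\<not> holds I e p)"
| "holds I e (Conj p q) = (holds I e p \<and> holds I e q)"
| "holds I e (Disj p q) = (holds I e p \<or> holds I e q)"
| "holds I e (Imp p q) = (holds I e p \<longrightarrow> holds I e q)"
| "holds I e (All x p) = (\<forall>a. holds I (e(x := a)) p)"
| "holds I e (Ex x p) = (\<exists>a. holds I (e(x := a)) p)"

definition valid :: "'u itself \<Rightarrow> ('f, 'r) fm \<Rightarrow> bool" where
  "valid U p \<longleftrightarrow> (\<forall>(I :: ('f, 'r, 'u) struct) e. holds I e p)"

type_synonym ('f, 'r) safety_problem = "('f, 'r) fm \<times> ('f tv, 'r tv) fm \<times> ('f, 'r) fm"

definition safety_problem :: "('f, 'r) vocab \<Rightarrow> ('f, 'r) safety_problem \<Rightarrow> bool" where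
  "safety_problem V P = (case P of (\<iota>, \<tau>, \<beta>) \<Rightarrow>
     closed \<iota> \<and> wf_fm V \<iota> \<and> closed \<tau> \<and> wf_fm (dbl V) \<tau> \<and> closed \<beta> \<and> wf_fm V \<beta>)"

definition safe_inductive_invariant ::
    "'u itself \<Rightarrow> ('f, 'r) vocab \<Rightarrow> ('f, 'r) safety_problem \<Rightarrow> ('f, 'r) fm \<Rightarrow> bool" where
  "safe_inductive_invariant U V P \<chi> = (case P of (\<iota>, \<tau>, \<beta>) \<Rightarrow>
     closed \<chi> \<and> wf_fm V \<chi> \<and>
     valid U (Imp \<iota> \<chi>) \<and>
     valid U (Imp (Conj (cur \<chi>) \<tau>) (prime \<chi>)) \<and>
     valid U (Imp \<chi> (Neg \<beta>)))"

text \<open>Substitute the term s for free occurrences of variable x (used with closed s).\<close>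
fun subst_trm :: "nat \<Rightarrow> 'f trm \<Rightarrow> 'f trm \<Rightarrow> 'f trm" where
  "subst_trm x s (Var y) = (if y = x then s else Var y)"
| "subst_trm x s (Fn f ts) = Fn f (map (subst_trm x s) ts)"

fun subst :: "nat \<Rightarrow> 'f trm \<Rightarrow> ('f, 'r) fm \<Rightarrow> ('f, 'r) fm" where
  "subst x s Bot = Bot"
| "subst x s (Atom r ts) = Atom r (map (subst_trm x s) ts)"
| "subst x s (Eq t u) = Eq (subst_trm x s t) (subst_trm x s u)"
| "subst x s (Neg p) = Neg (subst x s p)"
| "subst x s (Conj p q) = Conj (subst x s p) (subst x s q)"
| "subst x s (Disj p q) = Disj (subst x s p) (subst x s q)"
| "subst x s (Imp p q) = Imp (subst x s p) (subst x s q)"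
| "subst x s (All y p) = (if y = x then All y p else All y (subst x s p))"
| "subst x s (Ex y p) = (if y = x then Ex y p else Ex y (subst x s p))"

fun repc_trm :: "'f \<Rightarrow> 'f trm \<Rightarrow> 'f trm \<Rightarrow> 'f trm" where
  "repc_trm c t (Var y) = Var y"
| "repc_trm c t (Fn f ts) = (if f = c \<and> ts = [] then t else Fn f (map (repc_trm c t) ts))"

fun repc :: "'f \<Rightarrow> 'f trm \<Rightarrow> ('f, 'r) fm \<Rightarrow> ('f, 'r) fm" where
  "repc c t Bot = Bot"
| "repc c t (Atom r ts) = Atom r (map (repc_trm c t) ts)"
| "repc c t (Eq u v) = Eq (repc_trm c t u) (repc_trm c t v)"
| "repc c t (Neg p) = Neg (repc c t p)"
| "repc c t (Conj p q) = Conj (repc c t p) (repc c t q)"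
| "repc c t (Disj p q) = Disj (repc c t p) (repc c t q)"
| "repc c t (Imp p q) = Imp (repc c t p) (repc c t q)"
| "repc c t (All y p) = All y (repc c t p)"
| "repc c t (Ex y p) = Ex y (repc c t p)"

text \<open>xi[psi/m]: replace every atom m(t) by psi[t/w].\<close>
fun repl_rel :: "'r \<Rightarrow> ('f, 'r) fm \<Rightarrow> 'f \<Rightarrow> ('f, 'r) fm \<Rightarrow> ('f, 'r) fm" where
  "repl_rel m \<psi> w Bot = Bot"
| "repl_rel m \<psi> w (Atom r ts) =
     (if r = m then (case ts of [t] \<Rightarrow> repc w t \<psi> | _ \<Rightarrow> Atom r ts) else Atom r ts)"
| "repl_rel m \<psi> w (Eq u v) = Eq u v"
| "repl_rel m \<psi> w (Neg p) = Neg (repl_rel m \<psi> w p)"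
| "repl_rel m \<psi> w (Conj p q) = Conj (repl_rel m \<psi> w p) (repl_rel m \<psi> w q)"
| "repl_rel m \<psi> w (Disj p q) = Disj (repl_rel m \<psi> w p) (repl_rel m \<psi> w q)"
| "repl_rel m \<psi> w (Imp p q) = Imp (repl_rel m \<psi> w p) (repl_rel m \<psi> w q)"
| "repl_rel m \<psi> w (All y p) = All y (repl_rel m \<psi> w p)"
| "repl_rel m \<psi> w (Ex y p) = Ex y (repl_rel m \<psi> w p)"

definition Pi_w :: "('f, 'r) safety_problem \<Rightarrow> nat \<Rightarrow> ('f, 'r) fm \<Rightarrow> 'f \<Rightarrow> ('f, 'r) safety_problem" where
  "Pi_w P x \<phi> w = (case P of (\<iota>, \<tau>, \<beta>) \<Rightarrow>
     (let \<phi>w = subst x (Fn w []) \<phi> in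
      (Conj \<iota> \<phi>w,
       Conj (cur \<phi>w) (Conj \<tau> (Conj (Eq (Fn (Nxt w) []) (Fn (Cur w) [])) (prime \<phi>w))),
       Conj \<beta> \<phi>w)))"

definition Pi_sound :: "('f, 'r) safety_problem \<Rightarrow> nat \<Rightarrow> ('f, 'r) fm \<Rightarrow> 'r \<Rightarrow> ('f, 'r) safety_problem" where
  "Pi_sound P x \<phi> m = (case P of (\<iota>, \<tau>, \<beta>) \<Rightarrow>
     (Conj \<iota> (All x (Imp \<phi> (Atom m [Var x]))),
      Conj \<tau> (All x (Imp (Conj (Atom (Cur m) [Var x]) (Conj (cur \<phi>) (prime \<phi>)))
                             (Atom (Nxt m) [Var x]))),
      Conj \<beta> (All x (Imp \<phi> (Neg (Atom m [Var x]))))))"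

end

theory Submission
  imports Defs
begin

(* Read \<xi>[\<psi>/m] in a structure I as \<xi> in the expansion of I that interprets m as the set
   of values a for which \<psi> holds with w interpreted as a. In that expansion m satisfies the
   side conditions of \<Pi>^sound: initially every witness of \<phi> is in m because \<psi> holds
   initially in \<Pi>^w; a transition preserves membership of a witness that satisfies \<phi>
   before and after it, because \<psi> is inductive in \<Pi>^w with w frozen to that value; and a
   bad state contains no witness of \<phi> in m because \<psi> excludes bad states with \<phi>(w).
   Initiation, consecution and safety of \<xi> for \<Pi>^sound thus become those of \<xi>[\<psi>/m]
   for \<Pi>. *)

(* Only the nullary use of c changes, matching repc_trm, which replaces only Fn c []. *)
definition upd_const :: "('f, 'r, 'u) struct \<Rightarrow> 'f \<Rightarrow> 'u \<Rightarrow> ('f, 'r, 'u) struct" where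
  "upd_const I c a = ((fst I)(c := (\<lambda>as. if as = [] then a else fst I c as)), snd I)"

definition upd_rel :: "('f, 'r, 'u) struct \<Rightarrow> 'r \<Rightarrow> ('u list \<Rightarrow> bool) \<Rightarrow> ('f, 'r, 'u) struct" where
  "upd_rel I r P = (fst I, (snd I)(r := P))"

definition reduct :: "('f \<Rightarrow> 'g) \<Rightarrow> ('r \<Rightarrow> 's) \<Rightarrow> ('g, 's, 'u) struct \<Rightarrow> ('f, 'r, 'u) struct" where
  "reduct F G I = (fst I \<circ> F, snd I \<circ> G)"

(* The interpretation of m under which the atom m(t) means \<psi>[t/w]; atoms of m with another
   number of arguments are left alone by repl_rel and keep their meaning. The environment is
   irrelevant since \<psi> will be closed. *)
definition defined_rel :: "('f, 'r, 'u) struct \<Rightarrow> 'r \<Rightarrow> ('f, 'r) fm \<Rightarrow> 'f \<Rightarrow> 'u list \<Rightarrow> bool" where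
  "defined_rel I m \<psi> w as =
     (case as of [a] \<Rightarrow> holds (upd_const I w a) (\<lambda>_. undefined) \<psi> | _ \<Rightarrow> snd I m as)"

lemma evalt_cong_vocab:
  assumes "wf_trm V t" and "\<And>f. fun_ar V f \<noteq> None \<Longrightarrow> fst I f = fst J f"
  shows "evalt I e t = evalt J e t"
  using assms(1)
proof (induction t)
  case (Fn f ts)
  then have "map (evalt I e) ts = map (evalt J e) ts" and "fst I f = fst J f"
    using assms(2) by auto
  then show ?case by (simp del: map_eq_conv)
qed simp

lemma holds_cong_vocab:
  assumes "wf_fm V p"
    and "\<And>f. fun_ar V f \<noteq> None \<Longrightarrow> fst I f = fst J f"
    and "\<And>r. rel_ar V r \<noteq> None \<Longrightarrow> snd I r = snd J r"
  shows "holds I e p = holds J e p"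
  using assms(1)
proof (induction p arbitrary: e)
  case (Atom r ts)
  then have "map (evalt I e) ts = map (evalt J e) ts" and "snd I r = snd J r"
    using assms(3) by (auto intro!: evalt_cong_vocab[OF _ assms(2)])
  then show ?case by (simp del: map_eq_conv)
next
  case (Eq s t)
  then have "evalt I e s = evalt J e s" "evalt I e t = evalt J e t"
    using evalt_cong_vocab[OF _ assms(2)] by auto
  then show ?case by simp
qed simp_all

lemma evalt_cong_env: "(\<And>y. y \<in> fv_trm t \<Longrightarrow> e y = e' y) \<Longrightarrow> evalt I e t = evalt I e' t"
proof (induction t)
  case (Fn f ts)
  then have "map (evalt I e) ts = map (evalt I e') ts" by auto
  then show ?case by (simp del: map_eq_conv)
qed simp

lemma holds_cong_env: "(\<And>y. y \<in> fv p \<Longrightarrow> e y = e' y) \<Longrightarrow> holds I e p = holds I e' p"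
proof (induction p arbitrary: e e')
  case (Atom r ts)
  then have "map (evalt I e) ts = map (evalt I e') ts"
    by (auto intro!: evalt_cong_env)
  then show ?case by (simp del: map_eq_conv)
next
  case (Eq s t)
  then have "evalt I e s = evalt I e' s" "evalt I e t = evalt I e' t"
    by (auto intro!: evalt_cong_env)
  then show ?case by simp
next
  case (Neg p)
  have "holds I e p = holds I e' p" using Neg.prems by (auto intro!: Neg.IH)
  then show ?case by simp
next
  case (Conj p q)
  have "holds I e p = holds I e' p" "holds I e q = holds I e' q"
    using Conj.prems by (auto intro!: Conj.IH)
  then show ?case by simp
next
  case (Disj p q)
  have "holds I e p = holds I e' p" "holds I e q = holds I e' q"
    using Disj.prems by (auto intro!: Disj.IH)
  then show ?case by simp
next
  case (Imp p q)
  have "holds I e p = holds I e' p" "holds I e q = holds I e' q"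
    using Imp.prems by (auto intro!: Imp.IH)
  then show ?case by simp
next
  case (All x p)
  have "holds I (e(x := a)) p = holds I (e'(x := a)) p" for a
    using All.prems by (auto intro!: All.IH)
  then show ?case by simp
next
  case (Ex x p)
  have "holds I (e(x := a)) p = holds I (e'(x := a)) p" for a
    using Ex.prems by (auto intro!: Ex.IH)
  then show ?case by simp
qed simp

lemma holds_closed: "closed p \<Longrightarrow> holds I e p = holds I e' p"
  unfolding closed_def by (rule holds_cong_env) simp

lemma evalt_subst_trm: "evalt I e (subst_trm x s t) = evalt I (e(x := evalt I e s)) t"
proof (induction t)
  case (Fn f ts)
  then have "map (evalt I e \<circ> subst_trm x s) ts = map (evalt I (e(x := evalt I e s))) ts"
    by (auto simp: fun_upd_def)
  then show ?case by (simp add: fun_upd_def del: map_eq_conv)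
qed simp

lemma holds_subst:
  assumes "\<And>e. evalt I e s = v"
  shows "holds I e (subst x s p) = holds I (e(x := v)) p"
proof (induction p arbitrary: e)
  case (Atom r ts)
  have "map (evalt I e \<circ> subst_trm x s) ts = map (evalt I (e(x := v))) ts"
    by (simp add: evalt_subst_trm assms)
  then show ?case by (simp add: fun_upd_def del: map_eq_conv)
next
  case (All y p)
  show ?case
  proof (cases "y = x")
    case True
    then show ?thesis by (simp only: subst.simps simp_thms if_True holds.simps fun_upd_upd)
  next
    case False
    have "holds I (e(y := a)) (subst x s p) = holds I (e(x := v, y := a)) p" for a
      using All.IH[of "e(y := a)"] unfolding fun_upd_twist[OF False] .
    then show ?thesis by (simp only: subst.simps if_not_P[OF False] holds.simps)
  qed
next
  case (Ex y p)
  show ?case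
  proof (cases "y = x")
    case True
    then show ?thesis by (simp only: subst.simps simp_thms if_True holds.simps fun_upd_upd)
  next
    case False
    have "holds I (e(y := a)) (subst x s p) = holds I (e(x := v, y := a)) p" for a
      using Ex.IH[of "e(y := a)"] unfolding fun_upd_twist[OF False] .
    then show ?thesis by (simp only: subst.simps if_not_P[OF False] holds.simps)
  qed
qed (simp_all add: evalt_subst_trm assms)

lemma evalt_map_trm: "evalt I e (map_trm F t) = evalt (reduct F G I) e t"
proof (induction t)
  case (Fn f ts)
  then have "map (evalt I e \<circ> map_trm F) ts = map (evalt (reduct F G I) e) ts" by auto
  then show ?case by (simp add: reduct_def del: map_eq_conv)
qed simp

lemma holds_map_fm: "holds I e (map_fm F G p) = holds (reduct F G I) e p"
proof (induction p arbitrary: e)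
  case (Atom r ts)
  have "map (evalt I e \<circ> map_trm F) ts = map (evalt (reduct F G I) e) ts"
    by (simp add: evalt_map_trm[of _ _ _ _ G])
  then show ?case by (simp add: reduct_def del: map_eq_conv)
qed (simp_all add: evalt_map_trm[of _ _ _ _ G])

lemma holds_cur: "holds I e (cur p) = holds (reduct Cur Cur I) e p"
  unfolding cur_def by (rule holds_map_fm)

lemma holds_prime: "holds I e (prime p) = holds (reduct Nxt Nxt I) e p"
  unfolding prime_def by (rule holds_map_fm)

lemma evalt_repc_trm: "evalt I e (repc_trm c t s) = evalt (upd_const I c (evalt I e t)) e s"
proof (induction s)
  case (Fn f ts)
  show ?case
  proof (cases "f = c \<and> ts = []")
    case True
    then show ?thesis by (simp add: upd_const_def)
  next
    case False
    from Fn have "map (evalt I e \<circ> repc_trm c t) ts = map (evalt (upd_const I c (evalt I e t)) e) ts"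
      by simp
    with False show ?thesis by (auto simp: upd_const_def simp del: map_eq_conv)
  qed
qed simp

lemma holds_repc:
  "fv_trm t \<inter> bv p = {} \<Longrightarrow> holds I e (repc c t p) = holds (upd_const I c (evalt I e t)) e p"
proof (induction p arbitrary: e)
  case (Atom r ts)
  have "map (evalt I e \<circ> repc_trm c t) ts = map (evalt (upd_const I c (evalt I e t)) e) ts"
    by (simp add: evalt_repc_trm)
  then show ?case by (simp add: upd_const_def del: map_eq_conv)
next
  case (All y p)
  have "evalt I (e(y := a)) t = evalt I e t" for a
    by (rule evalt_cong_env) (use All.prems in auto)
  with All show ?case by simp
next
  case (Ex y p)
  have "evalt I (e(y := a)) t = evalt I e t" for a
    by (rule evalt_cong_env) (use Ex.prems in auto)
  with Ex show ?case by simp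
qed (simp_all add: evalt_repc_trm Int_Un_distrib)

lemma snd_upd_rel [simp]: "snd (upd_rel I r P) = (snd I)(r := P)"
  by (simp add: upd_rel_def)

lemma evalt_upd_rel [simp]: "evalt (upd_rel I r P) = evalt I"
proof (intro ext)
  fix e t show "evalt (upd_rel I r P) e t = evalt I e t"
  proof (induction t)
    case (Fn f ts)
    then have "map (evalt (upd_rel I r P) e) ts = map (evalt I e) ts" by simp
    then show ?case by (simp add: upd_rel_def del: map_eq_conv)
  qed simp
qed

lemma holds_upd_const_fresh:
  "wf_fm V p \<Longrightarrow> fun_ar V c = None \<Longrightarrow> holds (upd_const I c a) e p = holds I e p"
  by (erule holds_cong_vocab) (auto simp: upd_const_def)

lemma holds_upd_rel_fresh:
  "wf_fm V p \<Longrightarrow> rel_ar V r = None \<Longrightarrow> holds (upd_rel I r P) e p = holds I e p"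
  by (erule holds_cong_vocab) (auto simp: upd_rel_def)

lemma holds_subst_fresh_const:
  assumes "wf_fm V \<phi>" and "fv \<phi> \<subseteq> {x}" and "fun_ar V w = None"
  shows "holds (upd_const I w a) e' (subst x (Fn w []) \<phi>) = holds I (e(x := a)) \<phi>"
proof -
  have "holds (upd_const I w a) e' (subst x (Fn w []) \<phi>) = holds (upd_const I w a) (e'(x := a)) \<phi>"
    by (rule holds_subst) (simp add: upd_const_def)
  also have "\<dots> = holds I (e'(x := a)) \<phi>"
    using assms(1,3) by (rule holds_upd_const_fresh)
  also have "\<dots> = holds I (e(x := a)) \<phi>"
    by (rule holds_cong_env) (use assms(2) in auto)
  finally show ?thesis .
qed

lemma inj_Cur: "inj Cur" and inj_Nxt: "inj Nxt"
  by (simp_all add: inj_def)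

lemma reduct_upd_const: "inj F \<Longrightarrow> reduct F G (upd_const I (F c) a) = upd_const (reduct F G I) c a"
  by (auto simp: reduct_def upd_const_def fun_eq_iff inj_eq)

lemma reduct_upd_const_outside: "(\<And>c'. F c' \<noteq> c) \<Longrightarrow> reduct F G (upd_const I c a) = reduct F G I"
  by (auto simp: reduct_def upd_const_def fun_eq_iff)

lemma reduct_upd_rel: "inj G \<Longrightarrow> reduct F G (upd_rel I (G r) P) = upd_rel (reduct F G I) r P"
  by (auto simp: reduct_def upd_rel_def fun_eq_iff inj_eq)

lemma reduct_upd_rel_outside: "(\<And>r'. G r' \<noteq> r) \<Longrightarrow> reduct F G (upd_rel I r P) = reduct F G I"
  by (auto simp: reduct_def upd_rel_def fun_eq_iff)

lemma holds_repl_rel: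
  assumes "closed \<psi>"
  shows "(fv p \<union> bv p) \<inter> bv \<psi> = {} \<Longrightarrow>
    holds I e (repl_rel m \<psi> w p) = holds (upd_rel I m (defined_rel I m \<psi> w)) e p"
proof (induction p arbitrary: e)
  case (Atom r ts)
  show ?case
  proof (cases "r = m \<and> length ts = 1")
    case True
    then obtain t where ts: "ts = [t]" and r: "r = m" by (auto simp: length_Suc_conv)
    then have "fv_trm t \<inter> bv \<psi> = {}" using Atom.prems by auto
    then have "holds I e (repl_rel m \<psi> w (Atom r ts)) = holds (upd_const I w (evalt I e t)) e \<psi>"
      using ts r by (simp add: holds_repc)
    also have "\<dots> = defined_rel I m \<psi> w [evalt I e t]"
      using holds_closed[OF assms] by (simp add: defined_rel_def)
    finally show ?thesis using ts r by simp
  next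
    case False
    then show ?thesis by (auto simp: defined_rel_def split: list.split)
  qed
qed auto

lemma fv_repc_trm: "fv_trm (repc_trm c t s) \<subseteq> fv_trm s \<union> fv_trm t"
  by (induction s) auto

lemma fv_repc: "fv (repc c t p) \<subseteq> fv p \<union> fv_trm t"
proof (induction p)
  case (Atom r ts)
  then show ?case using fv_repc_trm by fastforce
next
  case (Eq u v)
  then show ?case using fv_repc_trm by fastforce
qed auto

lemma fv_repl_rel: "closed \<psi> \<Longrightarrow> fv (repl_rel m \<psi> w p) \<subseteq> fv p"
proof (induction p)
  case (Atom r ts)
  then show ?case using fv_repc[of w _ \<psi>] by (auto simp: closed_def split: list.split)
qed auto

lemma wf_trm_add_unary_rel [simp]: "wf_trm (add_unary_rel V m) t = wf_trm V t"
  by (induction t) (simp_all add: add_unary_rel_def)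

lemma wf_repc_trm:
  "wf_trm (add_const V c) s \<Longrightarrow> wf_trm V t \<Longrightarrow> fun_ar V c = None \<Longrightarrow> wf_trm V (repc_trm c t s)"
  by (induction s) (auto simp: add_const_def split: if_splits)

lemma wf_repc:
  "wf_fm (add_const V c) p \<Longrightarrow> wf_trm V t \<Longrightarrow> fun_ar V c = None \<Longrightarrow> wf_fm V (repc c t p)"
  by (induction p) (auto simp: wf_repc_trm add_const_def)

lemma wf_repl_rel:
  assumes "wf_fm (add_const V w) \<psi>" and "fun_ar V w = None"
  shows "wf_fm (add_unary_rel V m) p \<Longrightarrow> wf_fm V (repl_rel m \<psi> w p)"
proof (induction p)
  case (Atom r ts)
  show ?case
  proof (cases "r = m")
    case True
    with Atom have "length ts = 1" by (simp add: add_unary_rel_def)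
    then obtain t where "ts = [t]" by (auto simp: length_Suc_conv)
    with True Atom assms show ?thesis by (simp add: wf_repc)
  next
    case False
    then have "rel_ar (add_unary_rel V m) r = rel_ar V r" by (simp add: add_unary_rel_def)
    with Atom False show ?thesis by simp
  qed
qed auto

locale invariant_composition =
  fixes U :: "'u itself" and V :: "('f, 'r) vocab"
    and \<iota> \<beta> \<phi> :: "('f, 'r) fm" and \<tau> :: "('f tv, 'r tv) fm"
    and x :: nat and w :: 'f and m :: 'r and \<xi> \<psi> :: "('f, 'r) fm"
  assumes problem: "safety_problem V (\<iota>, \<tau>, \<beta>)"
    and wf_\<phi>: "wf_fm V \<phi>" and fv_\<phi>: "fv \<phi> \<subseteq> {x}"
    and fresh_w: "fun_ar V w = None" and fresh_m: "rel_ar V m = None"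
    and soundness_inv: "safe_inductive_invariant U (add_unary_rel V m) (Pi_sound (\<iota>, \<tau>, \<beta>) x \<phi> m) \<xi>"
    and witness_inv: "safe_inductive_invariant U (add_const V w) (Pi_w (\<iota>, \<tau>, \<beta>) x \<phi> w) \<psi>"
    and bv_disjoint: "bv \<xi> \<inter> bv \<psi> = {}"
begin

abbreviation \<phi>w :: "('f, 'r) fm" where
  "\<phi>w \<equiv> subst x (Fn w []) \<phi>"

abbreviation m_as_\<psi> :: "('f, 'r, 'u) struct \<Rightarrow> ('f, 'r, 'u) struct" where
  "m_as_\<psi> I \<equiv> upd_rel I m (defined_rel I m \<psi> w)"

lemma problem_wf:
  shows wf_\<iota>: "wf_fm V \<iota>" and wf_\<tau>: "wf_fm (dbl V) \<tau>" and wf_\<beta>: "wf_fm V \<beta>"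
  using problem by (simp_all add: safety_problem_def)

lemma soundness_inv_unfolded:
  fixes I :: "('f, 'r, 'u) struct" and J :: "('f tv, 'r tv, 'u) struct"
  shows closed_\<xi>: "closed \<xi>" and wf_\<xi>: "wf_fm (add_unary_rel V m) \<xi>"
    and \<xi>_initiation: "holds I e \<iota> \<Longrightarrow> (\<And>a. holds I (e(x := a)) \<phi> \<Longrightarrow> snd I m [a]) \<Longrightarrow> holds I e \<xi>"
    and \<xi>_consecution: "holds J e (cur \<xi>) \<Longrightarrow> holds J e \<tau> \<Longrightarrow>
      (\<And>a. snd J (Cur m) [a] \<Longrightarrow> holds J (e(x := a)) (cur \<phi>) \<Longrightarrow> holds J (e(x := a)) (prime \<phi>)
        \<Longrightarrow> snd J (Nxt m) [a]) \<Longrightarrow> holds J e (prime \<xi>)"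
    and \<xi>_safety: "holds I e \<xi> \<Longrightarrow> holds I e \<beta> \<Longrightarrow> \<exists>a. holds I (e(x := a)) \<phi> \<and> snd I m [a]"
  using soundness_inv
  by (auto simp: safe_inductive_invariant_def Pi_sound_def valid_def simp del: split_paired_All)

lemma witness_inv_unfolded:
  fixes I :: "('f, 'r, 'u) struct" and J :: "('f tv, 'r tv, 'u) struct"
  shows closed_\<psi>: "closed \<psi>" and wf_\<psi>: "wf_fm (add_const V w) \<psi>"
    and \<psi>_initiation: "holds I e \<iota> \<Longrightarrow> holds I e \<phi>w \<Longrightarrow> holds I e \<psi>"
    and \<psi>_consecution: "holds J e (cur \<psi>) \<Longrightarrow> holds J e (cur \<phi>w) \<Longrightarrow> holds J e \<tau> \<Longrightarrow>
      fst J (Nxt w) [] = fst J (Cur w) [] \<Longrightarrow> holds J e (prime \<phi>w) \<Longrightarrow> holds J e (prime \<psi>)"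
    and \<psi>_safety: "holds I e \<psi> \<Longrightarrow> holds I e \<beta> \<Longrightarrow> holds I e \<phi>w \<Longrightarrow> False"
  using witness_inv
  by (auto simp: safe_inductive_invariant_def Pi_w_def valid_def Let_def simp del: split_paired_All)

lemma holds_repl_rel_\<xi>: "holds I e (repl_rel m \<psi> w \<xi>) = holds (m_as_\<psi> I) e \<xi>"
  using closed_\<xi> bv_disjoint by (simp add: holds_repl_rel[OF closed_\<psi>] closed_def)

lemma defined_rel_singleton: "defined_rel I m \<psi> w [a] = holds (upd_const I w a) e \<psi>"
  using holds_closed[OF closed_\<psi>] by (simp add: defined_rel_def)

lemma holds_\<phi>w: "holds (upd_const I w a) e \<phi>w = holds I (e(x := a)) \<phi>"
  using wf_\<phi> fv_\<phi> fresh_w by (rule holds_subst_fresh_const)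

lemma initiation:
  fixes I :: "('f, 'r, 'u) struct"
  assumes "holds I e \<iota>"
  shows "holds I e (repl_rel m \<psi> w \<xi>)"
proof -
  have "holds (m_as_\<psi> I) e \<xi>"
  proof (rule \<xi>_initiation)
    show "holds (m_as_\<psi> I) e \<iota>"
      using assms by (simp add: holds_upd_rel_fresh[OF wf_\<iota> fresh_m])
    fix a
    assume "holds (m_as_\<psi> I) (e(x := a)) \<phi>"
    then have "holds (upd_const I w a) e \<phi>w"
      by (simp add: holds_upd_rel_fresh[OF wf_\<phi> fresh_m] holds_\<phi>w)
    moreover have "holds (upd_const I w a) e \<iota>"
      using assms by (simp add: holds_upd_const_fresh[OF wf_\<iota> fresh_w])
    ultimately show "snd (m_as_\<psi> I) m [a]"
      using \<psi>_initiation by (simp add: defined_rel_singleton[where e = e])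
  qed
  then show ?thesis by (simp add: holds_repl_rel_\<xi>)
qed

lemma safety:
  fixes I :: "('f, 'r, 'u) struct"
  assumes "holds I e (repl_rel m \<psi> w \<xi>)" and "holds I e \<beta>"
  shows False
proof -
  have "holds (m_as_\<psi> I) e \<beta>"
    using assms(2) by (simp add: holds_upd_rel_fresh[OF wf_\<beta> fresh_m])
  with assms(1) obtain a where "holds (m_as_\<psi> I) (e(x := a)) \<phi>" and "snd (m_as_\<psi> I) m [a]"
    using \<xi>_safety holds_repl_rel_\<xi> by blast
  then have "holds (upd_const I w a) e \<phi>w" and "holds (upd_const I w a) e \<psi>"
    by (simp_all add: holds_upd_rel_fresh[OF wf_\<phi> fresh_m] holds_\<phi>w defined_rel_singleton[where e = e])
  moreover have "holds (upd_const I w a) e \<beta>"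
    using assms(2) by (simp add: holds_upd_const_fresh[OF wf_\<beta> fresh_w])
  ultimately show False using \<psi>_safety by blast
qed

lemma witness_step:
  fixes I :: "('f tv, 'r tv, 'u) struct"
  assumes "holds I e \<tau>"
    and "holds (reduct Cur Cur I) (e(x := a)) \<phi>" and "holds (reduct Nxt Nxt I) (e(x := a)) \<phi>"
    and "holds (upd_const (reduct Cur Cur I) w a) e \<psi>"
  shows "holds (upd_const (reduct Nxt Nxt I) w a) e \<psi>"
proof -
  \<comment> \<open>w and w' both denote a, so the frame condition w' = w of \<Pi>^w holds in K\<close>
  define K where "K = upd_const (upd_const I (Cur w) a) (Nxt w) a"
  have K_cur: "reduct Cur Cur K = upd_const (reduct Cur Cur I) w a"
    by (auto simp: K_def reduct_upd_const_outside reduct_upd_const[OF inj_Cur])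
  have K_nxt: "reduct Nxt Nxt K = upd_const (reduct Nxt Nxt I) w a"
    by (auto simp: K_def reduct_upd_const_outside reduct_upd_const[OF inj_Nxt])
  have "fun_ar (dbl V) (Cur w) = None" "fun_ar (dbl V) (Nxt w) = None"
    using fresh_w by (simp_all add: dbl_def)
  then have "holds K e \<tau>"
    using assms(1) by (simp add: K_def holds_upd_const_fresh[OF wf_\<tau>])
  moreover have "holds K e (cur \<psi>)" and "holds K e (cur \<phi>w)" and "holds K e (prime \<phi>w)"
    using assms(2-4) by (simp_all add: holds_cur holds_prime K_cur K_nxt holds_\<phi>w)
  moreover have "fst K (Nxt w) [] = fst K (Cur w) []"
    by (simp add: K_def upd_const_def)
  ultimately have "holds K e (prime \<psi>)"
    using \<psi>_consecution by blast
  then show ?thesis by (simp add: holds_prime K_nxt)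
qed

lemma consecution:
  fixes I :: "('f tv, 'r tv, 'u) struct"
  assumes "holds I e (cur (repl_rel m \<psi> w \<xi>))" and "holds I e \<tau>"
  shows "holds I e (prime (repl_rel m \<psi> w \<xi>))"
proof -
  define C N where "C = reduct Cur Cur I" and "N = reduct Nxt Nxt I"
  define J where "J = upd_rel (upd_rel I (Cur m) (defined_rel C m \<psi> w)) (Nxt m) (defined_rel N m \<psi> w)"
  have J_cur: "reduct Cur Cur J = m_as_\<psi> C"
    by (auto simp: J_def C_def reduct_upd_rel_outside reduct_upd_rel[OF inj_Cur])
  have J_nxt: "reduct Nxt Nxt J = m_as_\<psi> N"
    by (auto simp: J_def N_def reduct_upd_rel_outside reduct_upd_rel[OF inj_Nxt])
  have "holds J e (prime \<xi>)"
  proof (rule \<xi>_consecution)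
    show "holds J e (cur \<xi>)"
      using assms(1) by (simp add: holds_cur J_cur holds_repl_rel_\<xi> C_def)
    have "rel_ar (dbl V) (Cur m) = None" "rel_ar (dbl V) (Nxt m) = None"
      using fresh_m by (simp_all add: dbl_def)
    then show "holds J e \<tau>"
      using assms(2) by (simp add: J_def holds_upd_rel_fresh[OF wf_\<tau>])
    fix a
    assume m_a: "snd J (Cur m) [a]"
      and \<phi>_cur: "holds J (e(x := a)) (cur \<phi>)" and \<phi>_nxt: "holds J (e(x := a)) (prime \<phi>)"
    have "holds (upd_const C w a) e \<psi>"
      using m_a by (simp add: J_def defined_rel_singleton[where e = e])
    moreover have "holds C (e(x := a)) \<phi>" and "holds N (e(x := a)) \<phi>"
      using \<phi>_cur \<phi>_nxt
      by (simp_all add: holds_cur holds_prime J_cur J_nxt holds_upd_rel_fresh[OF wf_\<phi> fresh_m])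
    ultimately have "holds (upd_const N w a) e \<psi>"
      using witness_step assms(2) by (simp add: C_def N_def)
    then show "snd J (Nxt m) [a]"
      by (simp add: J_def defined_rel_singleton[where e = e])
  qed
  then show ?thesis by (simp add: holds_prime J_nxt holds_repl_rel_\<xi> N_def)
qed

lemma closed_repl_rel_\<xi>: "closed (repl_rel m \<psi> w \<xi>)"
  using fv_repl_rel[OF closed_\<psi>, of m w \<xi>] closed_\<xi> by (simp add: closed_def)

lemma wf_repl_rel_\<xi>: "wf_fm V (repl_rel m \<psi> w \<xi>)"
  using wf_\<psi> fresh_w wf_\<xi> by (rule wf_repl_rel)

end

theorem lemmaA1:
  fixes V :: "('f, 'r) vocab"
    and \<iota> \<beta> \<phi> :: "('f, 'r) fm"
    and \<tau> :: "('f tv, 'r tv) fm"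
    and x :: nat and w :: 'f and m :: 'r
    and \<xi> \<psi> :: "('f, 'r) fm"
    and U :: "'u itself"
  assumes "safety_problem V (\<iota>, \<tau>, \<beta>)"
    and "wf_fm V \<phi>" and "fv \<phi> \<subseteq> {x}"
    and "fun_ar V w = None"
    and "rel_ar V m = None"
    and "safe_inductive_invariant U (add_unary_rel V m) (Pi_sound (\<iota>, \<tau>, \<beta>) x \<phi> m) \<xi>"
    and "safe_inductive_invariant U (add_const V w) (Pi_w (\<iota>, \<tau>, \<beta>) x \<phi> w) \<psi>"
    and "bv \<xi> \<inter> bv \<psi> = {}"
  shows "safe_inductive_invariant U V (\<iota>, \<tau>, \<beta>) (repl_rel m \<psi> w \<xi>)"
proof -
  interpret invariant_composition U V \<iota> \<beta> \<phi> \<tau> x w m \<xi> \<psi>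
    using assms by unfold_locales
  show ?thesis
    using closed_repl_rel_\<xi> wf_repl_rel_\<xi> initiation consecution safety
    by (auto simp: safe_inductive_invariant_def valid_def simp del: split_paired_All)
qed

end
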